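(* Let $(\Omega,\Sigma,\mu)$ be a finite measure space and let $X(\mu)$ and $Y(\mu)$ be Banach rectangular function spaces with the subsequence property. (i) If $T:X(\mu)\to Y(\mu)$ is a positive linear operator ($Tf\ge0$ whenever $f\ge 0$), then $T$ is continuous. (ii) If $X(\mu)$, with norm $\|\cdot\|$, is also a Banach rectangular function space with the subsequence property under another norm $\|\cdot\|_0$, then $\|\cdot\|$ and $\|\cdot\|_0$ are equivalent norms.
   Context: $L^0(\mu)$ is the space of equivalence classes (modulo $\mu$-a.e. equality) of real $\Sigma$-measurable functions, ordered $\mu$-a.e. A Banach rectangular function space is a vector subspace $X(\mu)\subseteq L^0(\mu)$ with a complete norm such that for some $C>0$, $\chi_Af\in X(\mu)$ and $\|\chi_Af\|\le C\|f\|$ for all $f\in X(\mu)$, $A\in\Sigma$. Subsequence property: whenever $f_n,f\in X(\mu)$ and $f_n\to f$ in norm, some subsequence converges to $f$ $\mu$-a.e. *)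

theory Defs
  imports "HOL-Analysis.Analysis"
begin

text \<open>Elements of L^0(mu) are represented by real Sigma-measurable functions; a subspace
  of L^0(mu) is represented by the set X of all representatives of its classes (so X is
  closed under a.e. equality), and a norm on it by a function N on representatives that
  is invariant under a.e. equality and vanishes exactly on the a.e.-zero functions.\<close>

definition banach_rect_fs ::
  "'a measure \<Rightarrow> ('a \<Rightarrow> real) set \<Rightarrow> (('a \<Rightarrow> real) \<Rightarrow> real) \<Rightarrow> bool" where
  "banach_rect_fs M X N \<longleftrightarrow>
     X \<subseteq> borel_measurable M \<and>
     (\<forall>f\<in>X. \<forall>g\<in>borel_measurable M. (AE x in M. f x = g x) \<longrightarrow> g \<in> X) \<and>
     (\<forall>f\<in>X. \<forall>g\<in>X. (AE x in M. f x = g x) \<longrightarrow> N f = N g) \<and>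
     (\<lambda>x. 0) \<in> X \<and>
     (\<forall>f\<in>X. \<forall>g\<in>X. (\<lambda>x. f x + g x) \<in> X) \<and>
     (\<forall>f\<in>X. \<forall>c::real. (\<lambda>x. c * f x) \<in> X) \<and>
     (\<forall>f\<in>X. N f \<ge> 0) \<and>
     (\<forall>f\<in>X. N f = 0 \<longleftrightarrow> (AE x in M. f x = 0)) \<and>
     (\<forall>f\<in>X. \<forall>c::real. N (\<lambda>x. c * f x) = \<bar>c\<bar> * N f) \<and>
     (\<forall>f\<in>X. \<forall>g\<in>X. N (\<lambda>x. f x + g x) \<le> N f + N g) \<and>
     (\<forall>s. (\<forall>n. s n \<in> X) \<and>
          (\<forall>e>0. \<exists>K. \<forall>m\<ge>K. \<forall>n\<ge>K. N (\<lambda>x. s m x - s n x) < e)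
          \<longrightarrow> (\<exists>f\<in>X. (\<lambda>n. N (\<lambda>x. s n x - f x)) \<longlonglongrightarrow> 0)) \<and>
     (\<exists>C>0. \<forall>f\<in>X. \<forall>A\<in>sets M.
          (\<lambda>x. indicator A x * f x) \<in> X \<and> N (\<lambda>x. indicator A x * f x) \<le> C * N f)"

definition subsequence_property ::
  "'a measure \<Rightarrow> ('a \<Rightarrow> real) set \<Rightarrow> (('a \<Rightarrow> real) \<Rightarrow> real) \<Rightarrow> bool" where
  "subsequence_property M X N \<longleftrightarrow>
     (\<forall>s f. (\<forall>n. s n \<in> X) \<and> f \<in> X \<and> (\<lambda>n. N (\<lambda>x. s n x - f x)) \<longlonglongrightarrow> 0
        \<longrightarrow> (\<exists>r. strict_mono r \<and> (AE x in M. (\<lambda>n. s (r n) x) \<longlonglongrightarrow> f x)))"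

definition positive_linear_op ::
  "'a measure \<Rightarrow> ('a \<Rightarrow> real) set \<Rightarrow> ('a \<Rightarrow> real) set \<Rightarrow> (('a \<Rightarrow> real) \<Rightarrow> ('a \<Rightarrow> real)) \<Rightarrow> bool" where
  "positive_linear_op M X Y T \<longleftrightarrow>
     (\<forall>f\<in>X. T f \<in> Y) \<and>
     (\<forall>f\<in>X. \<forall>g\<in>X. (AE x in M. f x = g x) \<longrightarrow> (AE x in M. T f x = T g x)) \<and>
     (\<forall>f\<in>X. \<forall>g\<in>X. AE x in M. T (\<lambda>y. f y + g y) x = T f x + T g x) \<and>
     (\<forall>f\<in>X. \<forall>c::real. AE x in M. T (\<lambda>y. c * f y) x = c * T f x) \<and>
     (\<forall>f\<in>X. (AE x in M. f x \<ge> 0) \<longrightarrow> (AE x in M. T f x \<ge> 0))"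

end

theory Submission
  imports Defs
begin

locale pseudometric =
  fixes S :: "'v set" and d :: "'v \<Rightarrow> 'v \<Rightarrow> real"
  assumes refl: "x \<in> S \<Longrightarrow> d x x = 0"
    and sym: "x \<in> S \<Longrightarrow> y \<in> S \<Longrightarrow> d x y = d y x"
    and triangle: "x \<in> S \<Longrightarrow> y \<in> S \<Longrightarrow> z \<in> S \<Longrightarrow> d x z \<le> d x y + d y z"
begin

lemma nonneg: "x \<in> S \<Longrightarrow> y \<in> S \<Longrightarrow> 0 \<le> d x y"
  using triangle[of x y x] refl sym by fastforce

definition rep :: "'v \<Rightarrow> 'v" where
  "rep x = (SOME y. y \<in> S \<and> d x y = 0)"

lemma rep_mem: "x \<in> S \<Longrightarrow> rep x \<in> S"
  and dist_rep: "x \<in> S \<Longrightarrow> d x (rep x) = 0"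
  unfolding rep_def by (metis (mono_tags, lifting) refl someI)+

lemma rep_eq: 
  assumes "x \<in> S" "y \<in> S" "d x y = 0"
  shows "rep x = rep y"
proof -
  have "d x z = d y z" if "z \<in> S" for z
    using triangle[of x y z] triangle[of y x z] assms sym[of x y] that by fastforce
  then have "(\<lambda>z. z \<in> S \<and> d x z = 0) = (\<lambda>z. z \<in> S \<and> d y z = 0)" by auto
  then show ?thesis unfolding rep_def by simp
qed

definition rep_dist :: "'v \<Rightarrow> 'v \<Rightarrow> real" where
  "rep_dist x y = (if x \<in> S \<and> y \<in> S then d x y else 0)"

lemma reps_subset: "rep ` S \<subseteq> S"
  using rep_mem by blast

lemma rep_dist_eq: "x \<in> rep ` S \<Longrightarrow> y \<in> rep ` S \<Longrightarrow> rep_dist x y = d x y"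
  using reps_subset by (auto simp: rep_dist_def)

sublocale reps: Metric_space "rep ` S" rep_dist
proof
  show "0 \<le> rep_dist x y" "rep_dist x y = rep_dist y x" for x y
    using nonneg sym by (auto simp: rep_dist_def)
  show "rep_dist x y = 0 \<longleftrightarrow> x = y" if xy: "x \<in> rep ` S" "y \<in> rep ` S" for x y
  proof
    obtain a b where ab: "a \<in> S" "b \<in> S" "x = rep a" "y = rep b"
      using xy by blast
    assume "rep_dist x y = 0"
    then have "d x y = 0" using xy by (simp add: rep_dist_eq)
    moreover have "d a b \<le> d a x + d x y + d y b"
      using triangle[of a x b] triangle[of x y b] ab xy reps_subset by force
    moreover have "d a x = 0" "d y b = 0"
      using dist_rep[OF ab(1)] dist_rep[OF ab(2)] sym[of b y] ab rep_mem by auto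
    ultimately have "d a b = 0" using nonneg[OF ab(1,2)] by linarith
    then show "x = y" using rep_eq[OF ab(1,2)] ab by simp
  qed (use xy reps_subset refl rep_dist_eq in auto)
  show "rep_dist x z \<le> rep_dist x y + rep_dist y z"
    if "x \<in> rep ` S" "y \<in> rep ` S" "z \<in> rep ` S" for x y z
    using that reps_subset triangle by (simp add: rep_dist_eq subset_iff)
qed

lemma limitin_reps_iff:
  assumes "range \<sigma> \<subseteq> rep ` S" "x \<in> S"
  shows "limitin reps.mtopology \<sigma> (rep x) sequentially \<longleftrightarrow> (\<lambda>n. d (\<sigma> n) x) \<longlonglongrightarrow> 0"
proof -
  have "d (\<sigma> n) (rep x) = d (\<sigma> n) x" for n
  proof -
    have "\<sigma> n \<in> S" "rep x \<in> S" using assms reps_subset rep_mem by auto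
    moreover have "d x (rep x) = 0" "d (rep x) x = 0"
      using dist_rep sym rep_mem \<open>x \<in> S\<close> by auto
    ultimately show ?thesis
      using triangle[of "\<sigma> n" x "rep x"] triangle[of "\<sigma> n" "rep x" x] \<open>x \<in> S\<close> by linarith
  qed
  moreover have "0 \<le> d (\<sigma> n) x" for n using nonneg assms reps_subset by blast
  ultimately show ?thesis
    using assms by (simp add: reps.limit_metric_sequentially rep_dist_eq range_subsetD LIMSEQ_iff)
qed

lemma limitin_reps_imp_tendsto:
  assumes "limitin reps.mtopology \<sigma> l sequentially"
  shows "l \<in> rep ` S" "(\<lambda>n. d (\<sigma> n) l) \<longlonglongrightarrow> 0"
proof -
  show "l \<in> rep ` S" using assms reps.limitin_mspace by blast
  moreover have "\<forall>\<^sub>F n in sequentially. \<sigma> n \<in> rep ` S \<and> rep_dist (\<sigma> n) l < \<epsilon>" if "\<epsilon> > 0" for \<epsilon>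
    using assms that by (simp add: reps.limitin_metric)
  ultimately have "\<forall>\<^sub>F n in sequentially. norm (d (\<sigma> n) l) < \<epsilon>" if "\<epsilon> > 0" for \<epsilon>
    using that reps_subset nonneg
    by (fastforce simp: rep_dist_eq subset_iff elim: eventually_mono)
  then show "(\<lambda>n. d (\<sigma> n) l) \<longlonglongrightarrow> 0" by (simp add: tendsto_iff)
qed

theorem Baire:
  fixes F :: "nat \<Rightarrow> 'v set"
  assumes complete: "\<And>\<sigma>. range \<sigma> \<subseteq> S \<Longrightarrow> (\<forall>e>0. \<exists>K. \<forall>m\<ge>K. \<forall>n\<ge>K. d (\<sigma> m) (\<sigma> n) < e) \<Longrightarrow>
                     \<exists>x\<in>S. (\<lambda>n. d (\<sigma> n) x) \<longlonglongrightarrow> 0"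
    and closed: "\<And>k \<sigma> x. range \<sigma> \<subseteq> F k \<Longrightarrow> x \<in> S \<Longrightarrow> (\<lambda>n. d (\<sigma> n) x) \<longlonglongrightarrow> 0 \<Longrightarrow> x \<in> F k"
    and sub: "\<And>k. F k \<subseteq> S" and cover: "S \<subseteq> (\<Union>k. F k)" and nonempty: "S \<noteq> {}"
  obtains x r k where "x \<in> S" "r > 0" "\<And>y. y \<in> S \<Longrightarrow> d x y < r \<Longrightarrow> y \<in> F k"
proof -
  have "reps.mcomplete"
    unfolding reps.mcomplete_def reps.MCauchy_def
  proof (intro allI impI)
    fix \<sigma> :: "nat \<Rightarrow> 'v"
    assume "range \<sigma> \<subseteq> rep ` S \<and> (\<forall>\<epsilon>>0. \<exists>N. \<forall>n n'. N \<le> n \<longrightarrow> N \<le> n' \<longrightarrow> rep_dist (\<sigma> n) (\<sigma> n') < \<epsilon>)"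
    then have "range \<sigma> \<subseteq> rep ` S" "\<forall>e>0. \<exists>K. \<forall>m\<ge>K. \<forall>n\<ge>K. d (\<sigma> m) (\<sigma> n) < e"
      by (auto simp: rep_dist_eq range_subsetD)
    moreover from this obtain x where "x \<in> S" "(\<lambda>n. d (\<sigma> n) x) \<longlonglongrightarrow> 0"
      using complete[of \<sigma>] reps_subset by blast
    ultimately show "\<exists>l. limitin reps.mtopology \<sigma> l sequentially"
      using limitin_reps_iff by blast
  qed
  define F' where "F' k = F k \<inter> rep ` S" for k
  have "closedin reps.mtopology (F' k)" for k
    unfolding reps.metric_closedin_iff_sequentially_closed
  proof (intro conjI allI impI)
    fix \<sigma> l assume "range \<sigma> \<subseteq> F' k \<and> limitin reps.mtopology \<sigma> l sequentially"
    then have "range \<sigma> \<subseteq> F k" "l \<in> rep ` S" "(\<lambda>n. d (\<sigma> n) l) \<longlonglongrightarrow> 0"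
      using limitin_reps_imp_tendsto by (auto simp: F'_def)
    then show "l \<in> F' k" using closed reps_subset by (auto simp: F'_def)
  qed (auto simp: F'_def)
  have "\<exists>k. reps.mtopology interior_of F' k \<noteq> {}"
  proof (rule ccontr)
    assume "\<nexists>k. reps.mtopology interior_of F' k \<noteq> {}"
    then have "reps.mtopology interior_of \<Union>(range F') = {}"
      using \<open>closedin reps.mtopology (F' _)\<close>
      by (intro reps.metric_Baire_category_alt \<open>reps.mcomplete\<close>) auto
    moreover have "\<Union>(range F') = rep ` S" using cover sub reps_subset by (auto simp: F'_def)
    ultimately have "rep ` S = {}" using interior_of_topspace[of reps.mtopology] by simp
    then show False using nonempty by simp
  qed
  then obtain k x where x: "x \<in> reps.mtopology interior_of F' k" by blast
  then obtain r where "r > 0" "reps.mball x r \<subseteq> F' k"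
    by (meson openin_interior_of reps.openin_mtopology interior_of_subset subset_trans)
  have "x \<in> rep ` S" using x interior_of_subset by (fastforce simp: F'_def)
  show thesis
  proof
    show "x \<in> S" "r > 0" using \<open>x \<in> rep ` S\<close> reps_subset \<open>r > 0\<close> by auto
    fix y assume "y \<in> S" "d x y < r"
    then have "d x (rep y) < r"
      using triangle[of x y "rep y"] dist_rep rep_mem \<open>x \<in> S\<close> by fastforce
    then have "rep y \<in> reps.mball x r" using \<open>x \<in> rep ` S\<close> \<open>y \<in> S\<close> by (simp add: rep_dist_eq)
    then have "range (\<lambda>_. rep y) \<subseteq> F k" using \<open>reps.mball x r \<subseteq> F' k\<close> by (auto simp: F'_def)
    moreover have "(\<lambda>n. d (rep y) y) \<longlonglongrightarrow> 0"
      using dist_rep sym rep_mem \<open>y \<in> S\<close> by simp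
    ultimately show "y \<in> F k" using closed[of "\<lambda>_. rep y" k y] \<open>y \<in> S\<close> by blast
  qed
qed

end

locale function_space =
  fixes X :: "('a \<Rightarrow> real) set"
  assumes zero_mem: "(\<lambda>x. 0) \<in> X"
    and add_mem: "f \<in> X \<Longrightarrow> g \<in> X \<Longrightarrow> (\<lambda>x. f x + g x) \<in> X"
    and scale_mem: "f \<in> X \<Longrightarrow> (\<lambda>x. c * f x) \<in> X"
begin

lemma diff_mem: "f \<in> X \<Longrightarrow> g \<in> X \<Longrightarrow> (\<lambda>x. f x - g x) \<in> X"
  using add_mem[of f "\<lambda>x. (-1) * g x"] scale_mem[of g "-1"] by simp

lemma sum_mem: "(\<And>i. i \<in> I \<Longrightarrow> v i \<in> X) \<Longrightarrow> (\<lambda>x. \<Sum>i\<in>I. v i x) \<in> X"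
  by (induction I rule: infinite_finite_induct) (simp_all add: zero_mem add_mem)

end

locale function_seminorm = function_space X for X :: "('a \<Rightarrow> real) set" +
  fixes P :: "('a \<Rightarrow> real) \<Rightarrow> real"
  assumes nonneg: "f \<in> X \<Longrightarrow> 0 \<le> P f"
    and homogeneous: "f \<in> X \<Longrightarrow> P (\<lambda>x. c * f x) = \<bar>c\<bar> * P f"
    and triangle: "f \<in> X \<Longrightarrow> g \<in> X \<Longrightarrow> P (\<lambda>x. f x + g x) \<le> P f + P g"
begin

lemma zero: "P (\<lambda>x. 0) = 0"
  using homogeneous[OF zero_mem, of 0] by simp

lemma minus: "f \<in> X \<Longrightarrow> P (\<lambda>x. - f x) = P f"
  using homogeneous[of f "-1"] by simp

lemma diff_commute: "f \<in> X \<Longrightarrow> g \<in> X \<Longrightarrow> P (\<lambda>x. f x - g x) = P (\<lambda>x. g x - f x)"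
  using minus[OF diff_mem, of g f] by simp

lemma diff_triangle:
  "f \<in> X \<Longrightarrow> g \<in> X \<Longrightarrow> h \<in> X \<Longrightarrow> P (\<lambda>x. f x - h x) \<le> P (\<lambda>x. f x - g x) + P (\<lambda>x. g x - h x)"
  using triangle[OF diff_mem diff_mem, of f g g h] by simp

lemma diff_le: "f \<in> X \<Longrightarrow> g \<in> X \<Longrightarrow> P (\<lambda>x. f x - g x) \<le> P f + P g"
  using triangle[OF _ scale_mem, of f g "-1"] homogeneous[of g "-1"] by simp

lemma le_add_diff: "f \<in> X \<Longrightarrow> g \<in> X \<Longrightarrow> P f \<le> P g + P (\<lambda>x. f x - g x)"
  using triangle[OF _ diff_mem, of g f g] by simp

lemma sum_le: "(\<And>i. i \<in> I \<Longrightarrow> v i \<in> X) \<Longrightarrow> P (\<lambda>x. \<Sum>i\<in>I. v i x) \<le> (\<Sum>i\<in>I. P (v i))"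
proof (induction I rule: infinite_finite_induct)
  case (insert i I)
  then show ?case
    using triangle[OF _ sum_mem, of "v i" I v] by fastforce
qed (simp_all add: zero)

sublocale dist: pseudometric X "\<lambda>f g. P (\<lambda>x. f x - g x)"
  by unfold_locales (simp add: zero, fact diff_commute, fact diff_triangle)

end

locale complete_function_seminorm = function_seminorm +
  assumes complete: "(\<And>n. s n \<in> X) \<Longrightarrow> (\<forall>e>0. \<exists>K. \<forall>m\<ge>K. \<forall>n\<ge>K. P (\<lambda>x. s m x - s n x) < e) \<Longrightarrow>
      \<exists>f\<in>X. (\<lambda>n. P (\<lambda>x. s n x - f x)) \<longlonglongrightarrow> 0"
begin

lemma summable_series_converges:
  assumes g: "\<And>n. g n \<in> X" and b: "\<And>n. P (g n) \<le> b n" and "summable b"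
  obtains H where "H \<in> X" "(\<lambda>n. P (\<lambda>x. (\<Sum>i<n. g i x) - H x)) \<longlonglongrightarrow> 0" "P H \<le> suminf b"
proof -
  define S where "S n = (\<lambda>x. \<Sum>i<n. g i x)" for n
  have S: "S n \<in> X" for n unfolding S_def using g by (intro sum_mem)
  have tail: "P (\<lambda>x. S m x - S n x) \<le> sum b {n..<m}" if "n \<le> m" for m n
  proof -
    have "P (\<lambda>x. S m x - S n x) = P (\<lambda>x. \<Sum>i\<in>{n..<m}. g i x)"
      using that by (simp add: S_def sum_diff_nat_ivl[of 0 n m, simplified] lessThan_atLeast0)
    also have "\<dots> \<le> (\<Sum>i\<in>{n..<m}. P (g i))" using g by (intro sum_le)
    also have "\<dots> \<le> sum b {n..<m}" using b by (intro sum_mono)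
    finally show ?thesis .
  qed
  have "\<forall>e>0. \<exists>K. \<forall>m\<ge>K. \<forall>n\<ge>K. P (\<lambda>x. S m x - S n x) < e"
  proof (intro allI impI)
    fix e :: real assume "e > 0"
    then obtain K where K: "\<And>n m. n \<ge> K \<Longrightarrow> \<bar>sum b {n..<m}\<bar> < e"
      using \<open>summable b\<close> unfolding summable_Cauchy by fastforce
    have "P (\<lambda>x. S m x - S n x) < e" if "m \<ge> K" "n \<ge> K" for m n
    proof (cases "n \<le> m")
      case True
      then show ?thesis using tail[OF True] K[OF \<open>n \<ge> K\<close>, of m] by linarith
    next
      case False
      then show ?thesis
        using tail[of m n] K[OF \<open>m \<ge> K\<close>, of n] diff_commute[OF S S, of m n] by linarith
    qed
    then show "\<exists>K. \<forall>m\<ge>K. \<forall>n\<ge>K. P (\<lambda>x. S m x - S n x) < e" by blast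
  qed
  then obtain H where "H \<in> X" and H: "(\<lambda>n. P (\<lambda>x. S n x - H x)) \<longlonglongrightarrow> 0"
    using complete S by blast
  moreover have "P H \<le> suminf b"
  proof (rule LIMSEQ_le_const)
    show "(\<lambda>n. sum b {..<n} + P (\<lambda>x. S n x - H x)) \<longlonglongrightarrow> suminf b"
      using tendsto_add[OF summable_LIMSEQ[OF \<open>summable b\<close>] H] by simp
    have "P H \<le> sum b {..<n} + P (\<lambda>x. S n x - H x)" for n
    proof -
      have "P (S n) \<le> sum b {..<n}"
        using tail[of 0 n] by (simp add: S_def lessThan_atLeast0)
      then show ?thesis
        using le_add_diff[OF \<open>H \<in> X\<close> S, of n] diff_commute[OF \<open>H \<in> X\<close> S, of n] by linarith
    qed
    then show "\<exists>N. \<forall>n\<ge>N. P H \<le> sum b {..<n} + P (\<lambda>x. S n x - H x)" by blast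
  qed
  ultimately show thesis using that by (simp add: S_def)
qed

end

locale dominated_seminorms =
  P: complete_function_seminorm X P + Q: complete_function_seminorm X Q
  for X :: "('a \<Rightarrow> real) set" and P Q +
  assumes dominated: "f \<in> X \<Longrightarrow> P f \<le> Q f"
    and null: "f \<in> X \<Longrightarrow> P f = 0 \<Longrightarrow> Q f = 0"
begin

lemma bound_from_approximation:
  assumes "0 \<le> L"
    and approx: "\<And>h \<epsilon>. h \<in> X \<Longrightarrow> \<epsilon> > 0 \<Longrightarrow> \<exists>g\<in>X. Q g \<le> L * P h \<and> P (\<lambda>x. h x - g x) < \<epsilon>"
    and "h \<in> X"
  shows "Q h \<le> 2 * L * P h"
proof (cases "P h = 0")
  case True
  then show ?thesis using null \<open>h \<in> X\<close> by simp
next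
  case False
  define c where "c = P h"
  have "c > 0" using False P.nonneg[OF \<open>h \<in> X\<close>] by (simp add: c_def)
  have ex: "\<exists>y. y \<in> X \<and> P y \<le> c * (1/2)^Suc n \<and> Q (\<lambda>t. x t - y t) \<le> L * P x" if "x \<in> X" for n x
  proof -
    obtain g where "g \<in> X" "Q g \<le> L * P x" "P (\<lambda>t. x t - g t) < c * (1/2)^Suc n"
      using approx[OF \<open>x \<in> X\<close>, of "c * (1/2)^Suc n"] \<open>c > 0\<close> by auto
    moreover have "(\<lambda>t. x t - (x t - g t)) = g" by simp
    ultimately show ?thesis using P.diff_mem[OF \<open>x \<in> X\<close> \<open>g \<in> X\<close>] by (metis less_imp_le)
  qed
  define step where
    "step n x = (SOME y. y \<in> X \<and> P y \<le> c * (1/2)^Suc n \<and> Q (\<lambda>t. x t - y t) \<le> L * P x)" for n x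
  have step: "step n x \<in> X \<and> P (step n x) \<le> c * (1/2)^Suc n \<and> Q (\<lambda>t. x t - step n x t) \<le> L * P x"
    if "x \<in> X" for n x
    unfolding step_def by (rule someI_ex[OF ex[OF that]])
  define hs where "hs = rec_nat h step"
  have hs: "hs n \<in> X \<and> P (hs n) \<le> c * (1/2)^n" for n
  proof (induction n)
    case (Suc n)
    then show ?case using step[of "hs n" n] by (simp add: hs_def)
  qed (simp add: hs_def c_def \<open>h \<in> X\<close>)
  define g where "g n = (\<lambda>x. hs n x - hs (Suc n) x)" for n
  have g: "g n \<in> X" "Q (g n) \<le> L * c * (1/2)^n" for n
  proof -
    show "g n \<in> X" unfolding g_def using hs by (simp add: P.diff_mem)
    have "Q (g n) \<le> L * P (hs n)" using step hs by (simp add: g_def hs_def)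
    also have "\<dots> \<le> L * c * (1/2)^n"
      using mult_left_mono[OF conjunct2[OF hs[of n]] \<open>0 \<le> L\<close>] by (simp add: mult.assoc)
    finally show "Q (g n) \<le> L * c * (1/2)^n" .
  qed
  have partial_sums: "(\<Sum>i<n. g i x) = h x - hs n x" for n x
    using sum_lessThan_telescope'[of "\<lambda>i. hs i x" n] by (simp add: g_def hs_def)
  have geometric: "(\<lambda>n. L * c * (1/2)^n) sums (2 * L * c)"
    using sums_mult[OF geometric_sums[of "1/2::real"], of "L * c"] by (simp add: mult_ac)
  obtain H where "H \<in> X" and H: "(\<lambda>n. Q (\<lambda>x. (\<Sum>i<n. g i x) - H x)) \<longlonglongrightarrow> 0"
      and "Q H \<le> (\<Sum>n. L * c * (1/2)^n)"
    by (rule Q.summable_series_converges[OF g(1) g(2) sums_summable[OF geometric]])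
  then have "Q H \<le> 2 * L * c" using sums_unique[OF geometric] by simp
  have "P (\<lambda>x. h x - H x) \<le> 0"
  proof (rule LIMSEQ_le_const)
    show "(\<lambda>n. c * (1/2)^n + Q (\<lambda>x. (h x - hs n x) - H x)) \<longlonglongrightarrow> 0"
      using tendsto_add[OF tendsto_mult_right_zero[OF LIMSEQ_power_zero[of "1/2::real"]] H]
      by (simp add: partial_sums)
    have "P (\<lambda>x. h x - H x) \<le> c * (1/2)^n + Q (\<lambda>x. (h x - hs n x) - H x)" for n
    proof -
      have "hs n \<in> X" "P (hs n) \<le> c * (1/2)^n" using hs by auto
      have rest: "(\<lambda>x. h x - hs n x) \<in> X" using P.diff_mem[OF \<open>h \<in> X\<close> \<open>hs n \<in> X\<close>] .
      have "P (\<lambda>x. h x - H x) \<le> P (\<lambda>x. h x - (h x - hs n x)) + P (\<lambda>x. (h x - hs n x) - H x)"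
        by (rule P.diff_triangle[OF \<open>h \<in> X\<close> rest \<open>H \<in> X\<close>])
      also have "P (\<lambda>x. (h x - hs n x) - H x) \<le> Q (\<lambda>x. (h x - hs n x) - H x)"
        by (rule dominated[OF P.diff_mem[OF rest \<open>H \<in> X\<close>]])
      finally show ?thesis using \<open>P (hs n) \<le> c * (1/2)^n\<close> by simp
    qed
    then show "\<exists>N. \<forall>n\<ge>N. P (\<lambda>x. h x - H x) \<le> c * (1/2)^n + Q (\<lambda>x. (h x - hs n x) - H x)"
      by blast
  qed
  then have "Q (\<lambda>x. h x - H x) = 0"
    using null P.nonneg P.diff_mem \<open>h \<in> X\<close> \<open>H \<in> X\<close> by (meson antisym)
  then have "Q h \<le> Q H" using Q.le_add_diff[OF \<open>h \<in> X\<close> \<open>H \<in> X\<close>] by simp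
  then show ?thesis using \<open>Q H \<le> 2 * L * c\<close> by (simp add: c_def)
qed

definition closure_Q_ball :: "real \<Rightarrow> ('a \<Rightarrow> real) set" where
  "closure_Q_ball k = {f \<in> X. \<forall>\<epsilon>>0. \<exists>g\<in>X. Q g \<le> k \<and> P (\<lambda>x. g x - f x) < \<epsilon>}"

lemma closure_Q_ball_closed:
  assumes "range \<sigma> \<subseteq> closure_Q_ball k" "f \<in> X" "(\<lambda>n. P (\<lambda>x. \<sigma> n x - f x)) \<longlonglongrightarrow> 0"
  shows "f \<in> closure_Q_ball k"
  unfolding closure_Q_ball_def
proof (intro CollectI conjI allI impI)
  fix \<epsilon> :: real assume "\<epsilon> > 0"
  have "\<forall>\<^sub>F n in sequentially. P (\<lambda>x. \<sigma> n x - f x) < \<epsilon> / 2"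
    by (rule order_tendstoD(2)[OF assms(3)]) (simp add: \<open>\<epsilon> > 0\<close>)
  then obtain n where n: "P (\<lambda>x. \<sigma> n x - f x) < \<epsilon> / 2"
    using eventually_happens'[OF sequentially_bot] by blast
  have "\<sigma> n \<in> closure_Q_ball k" using assms(1) by blast
  then have "\<sigma> n \<in> X" by (simp add: closure_Q_ball_def)
  obtain g where "g \<in> X" "Q g \<le> k" "P (\<lambda>x. g x - \<sigma> n x) < \<epsilon> / 2"
    using \<open>\<sigma> n \<in> closure_Q_ball k\<close> half_gt_zero[OF \<open>\<epsilon> > 0\<close>]
    unfolding closure_Q_ball_def by blast
  moreover have "P (\<lambda>x. g x - f x) \<le> P (\<lambda>x. g x - \<sigma> n x) + P (\<lambda>x. \<sigma> n x - f x)"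
    by (rule P.diff_triangle[OF \<open>g \<in> X\<close> \<open>\<sigma> n \<in> X\<close> \<open>f \<in> X\<close>])
  ultimately show "\<exists>g\<in>X. Q g \<le> k \<and> P (\<lambda>x. g x - f x) < \<epsilon>"
    using n by (intro bexI[of _ g]) auto
qed (fact \<open>f \<in> X\<close>)

lemma approximation_on_ball:
  obtains r K where "r > 0"
    "\<And>h \<epsilon>. h \<in> X \<Longrightarrow> P h < r \<Longrightarrow> \<epsilon> > 0 \<Longrightarrow> \<exists>g\<in>X. Q g \<le> K \<and> P (\<lambda>x. h x - g x) < \<epsilon>"
proof -
  have cover: "X \<subseteq> (\<Union>k. closure_Q_ball (real k))"
  proof
    fix f assume "f \<in> X"
    moreover have "Q f \<le> real (nat \<lceil>Q f\<rceil>)" by linarith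
    ultimately have "f \<in> closure_Q_ball (real (nat \<lceil>Q f\<rceil>))"
      using P.zero by (auto simp: closure_Q_ball_def)
    then show "f \<in> (\<Union>k. closure_Q_ball (real k))" by blast
  qed
  obtain x0 r k where "x0 \<in> X" "r > 0"
    and ball: "\<And>y. y \<in> X \<Longrightarrow> P (\<lambda>x. x0 x - y x) < r \<Longrightarrow> y \<in> closure_Q_ball (real k)"
  proof (rule P.dist.Baire[of "\<lambda>k. closure_Q_ball (real k)"])
    show "\<exists>f\<in>X. (\<lambda>n. P (\<lambda>x. \<sigma> n x - f x)) \<longlonglongrightarrow> 0"
      if "range \<sigma> \<subseteq> X" "\<forall>e>0. \<exists>K. \<forall>m\<ge>K. \<forall>n\<ge>K. P (\<lambda>x. \<sigma> m x - \<sigma> n x) < e" for \<sigma>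
      using P.complete[of \<sigma>] that by blast
    show "closure_Q_ball (real k) \<subseteq> X" for k by (auto simp: closure_Q_ball_def)
    show "X \<noteq> {}" using P.zero_mem by blast
    show "x \<in> closure_Q_ball (real k)"
      if "range \<sigma> \<subseteq> closure_Q_ball (real k)" "x \<in> X" "(\<lambda>n. P (\<lambda>y. \<sigma> n y - x y)) \<longlonglongrightarrow> 0"
      for k \<sigma> x
      using closure_Q_ball_closed[OF that] .
  qed (rule cover, blast)
  show thesis
  proof (rule that[of r "2 * real k"])
    show "r > 0" by fact
    fix h and \<epsilon> :: real assume "h \<in> X" "P h < r" "\<epsilon> > 0"
    define y where "y = (\<lambda>x. x0 x + h x)"
    have "y \<in> X" unfolding y_def using P.add_mem[OF \<open>x0 \<in> X\<close> \<open>h \<in> X\<close>] .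
    have "x0 \<in> closure_Q_ball (real k)" using ball[OF \<open>x0 \<in> X\<close>] \<open>r > 0\<close> P.zero by simp
    then obtain g2 where g2: "g2 \<in> X" "Q g2 \<le> k" "P (\<lambda>x. g2 x - x0 x) < \<epsilon> / 2"
      using half_gt_zero[OF \<open>\<epsilon> > 0\<close>] unfolding closure_Q_ball_def by blast
    have "y \<in> closure_Q_ball (real k)"
      using ball[OF \<open>y \<in> X\<close>] P.minus[OF \<open>h \<in> X\<close>] \<open>P h < r\<close> by (simp add: y_def)
    then obtain g1 where g1: "g1 \<in> X" "Q g1 \<le> k" "P (\<lambda>x. g1 x - y x) < \<epsilon> / 2"
      using half_gt_zero[OF \<open>\<epsilon> > 0\<close>] unfolding closure_Q_ball_def by blast
    have "(\<lambda>x. h x - (g1 x - g2 x)) = (\<lambda>x. (y x - g1 x) + (g2 x - x0 x))"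
      by (simp add: y_def algebra_simps)
    then have "P (\<lambda>x. h x - (g1 x - g2 x)) \<le> P (\<lambda>x. y x - g1 x) + P (\<lambda>x. g2 x - x0 x)"
      using P.triangle[OF P.diff_mem[OF \<open>y \<in> X\<close> \<open>g1 \<in> X\<close>] P.diff_mem[OF \<open>g2 \<in> X\<close> \<open>x0 \<in> X\<close>]]
      by simp
    then have "P (\<lambda>x. h x - (g1 x - g2 x)) < \<epsilon>"
      using g1 g2 P.diff_commute[OF \<open>y \<in> X\<close> \<open>g1 \<in> X\<close>] by linarith
    moreover have "Q (\<lambda>x. g1 x - g2 x) \<le> 2 * real k"
      using Q.diff_le[OF \<open>g1 \<in> X\<close> \<open>g2 \<in> X\<close>] g1 g2 by linarith
    ultimately show "\<exists>g\<in>X. Q g \<le> 2 * real k \<and> P (\<lambda>x. h x - g x) < \<epsilon>"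
      using P.diff_mem[OF \<open>g1 \<in> X\<close> \<open>g2 \<in> X\<close>] by blast
  qed
qed

lemma homogeneous_approximation:
  obtains L where "0 \<le> L"
    "\<And>h \<epsilon>. h \<in> X \<Longrightarrow> \<epsilon> > 0 \<Longrightarrow> \<exists>g\<in>X. Q g \<le> L * P h \<and> P (\<lambda>x. h x - g x) < \<epsilon>"
proof -
  obtain r K where "r > 0"
    and ball: "\<And>h \<epsilon>. h \<in> X \<Longrightarrow> P h < r \<Longrightarrow> \<epsilon> > 0 \<Longrightarrow> \<exists>g\<in>X. Q g \<le> K \<and> P (\<lambda>x. h x - g x) < \<epsilon>"
    using approximation_on_ball by blast
  have "0 \<le> K"
    using ball[OF P.zero_mem, of 1] \<open>r > 0\<close> P.zero Q.nonneg by force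
  show thesis
  proof (rule that[of "2 * K / r"])
    show "0 \<le> 2 * K / r" using \<open>0 \<le> K\<close> \<open>r > 0\<close> by simp
    fix h and \<epsilon> :: real assume "h \<in> X" "\<epsilon> > 0"
    show "\<exists>g\<in>X. Q g \<le> 2 * K / r * P h \<and> P (\<lambda>x. h x - g x) < \<epsilon>"
    proof (cases "P h = 0")
      case True
      then show ?thesis using \<open>h \<in> X\<close> null \<open>\<epsilon> > 0\<close> P.zero by (intro bexI[of _ h]) auto
    next
      case False
      define t where "t = r / (2 * P h)"
      have "P h > 0" using False P.nonneg[OF \<open>h \<in> X\<close>] by simp
      then have "t > 0" using \<open>r > 0\<close> by (simp add: t_def)
      have "P (\<lambda>x. t * h x) < r"
        using P.homogeneous[OF \<open>h \<in> X\<close>, of t] \<open>t > 0\<close> \<open>P h > 0\<close> \<open>r > 0\<close> by (simp add: t_def)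
      then obtain g where "g \<in> X" "Q g \<le> K" and g: "P (\<lambda>x. t * h x - g x) < t * \<epsilon>"
        using ball[OF P.scale_mem[OF \<open>h \<in> X\<close>]] \<open>t > 0\<close> \<open>\<epsilon> > 0\<close> by (meson mult_pos_pos)
      have "Q (\<lambda>x. (1 / t) * g x) = Q g / t"
        using Q.homogeneous[OF \<open>g \<in> X\<close>, of "1 / t"] \<open>t > 0\<close> by simp
      also have "\<dots> \<le> 2 * K / r * P h"
        using \<open>Q g \<le> K\<close> \<open>t > 0\<close> \<open>P h > 0\<close> \<open>r > 0\<close> by (simp add: t_def field_simps)
      finally have "Q (\<lambda>x. (1 / t) * g x) \<le> 2 * K / r * P h" .
      moreover have "P (\<lambda>x. h x - (1 / t) * g x) = P (\<lambda>x. t * h x - g x) / t"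
        using P.homogeneous[OF P.diff_mem[OF P.scale_mem[OF \<open>h \<in> X\<close>, of t] \<open>g \<in> X\<close>], of "1 / t"] \<open>t > 0\<close>
        by (simp add: right_diff_distrib)
      moreover have "P (\<lambda>x. t * h x - g x) / t < \<epsilon>"
        using g \<open>t > 0\<close> by (simp add: divide_less_eq mult.commute)
      ultimately show ?thesis using P.scale_mem[OF \<open>g \<in> X\<close>] by fastforce
    qed
  qed
qed

theorem bounded: "\<exists>C>0. \<forall>f\<in>X. Q f \<le> C * P f"
proof -
  obtain L where "0 \<le> L"
    and approx: "\<And>h \<epsilon>. h \<in> X \<Longrightarrow> \<epsilon> > 0 \<Longrightarrow> \<exists>g\<in>X. Q g \<le> L * P h \<and> P (\<lambda>x. h x - g x) < \<epsilon>"
    using homogeneous_approximation by blast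
  have "Q f \<le> (2 * L + 1) * P f" if "f \<in> X" for f
    using bound_from_approximation[OF \<open>0 \<le> L\<close> approx that] P.nonneg[OF that]
    by (simp add: distrib_right)
  then show ?thesis using \<open>0 \<le> L\<close> by (intro exI[of _ "2 * L + 1"]) auto
qed

end

context
  fixes M :: "'a measure" and X :: "('a \<Rightarrow> real) set" and N
  assumes bfs: "banach_rect_fs M X N"
begin

lemma banach_rect_fs_complete_function_seminorm: "complete_function_seminorm X N"
  using bfs
  unfolding complete_function_seminorm_def complete_function_seminorm_axioms_def
    function_seminorm_def function_seminorm_axioms_def function_space_def banach_rect_fs_def
  by blast

lemma banach_rect_fs_measurable: "f \<in> X \<Longrightarrow> f \<in> borel_measurable M"
  using bfs unfolding banach_rect_fs_def by blast

lemma banach_rect_fs_ae_closed: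
  "f \<in> X \<Longrightarrow> g \<in> borel_measurable M \<Longrightarrow> (AE x in M. f x = g x) \<Longrightarrow> g \<in> X"
  using bfs unfolding banach_rect_fs_def by blast

lemma banach_rect_fs_norm_cong_ae:
  "f \<in> X \<Longrightarrow> g \<in> X \<Longrightarrow> (AE x in M. f x = g x) \<Longrightarrow> N f = N g"
  using bfs unfolding banach_rect_fs_def by blast

lemma banach_rect_fs_norm_eq_0_iff: "f \<in> X \<Longrightarrow> N f = 0 \<longleftrightarrow> (AE x in M. f x = 0)"
  using bfs unfolding banach_rect_fs_def by blast

lemma banach_rect_fs_abs:
  obtains C where "C > 0" "\<And>f. f \<in> X \<Longrightarrow> (\<lambda>x. \<bar>f x\<bar>) \<in> X \<and> N (\<lambda>x. \<bar>f x\<bar>) \<le> C * N f"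
proof -
  interpret complete_function_seminorm X N by (rule banach_rect_fs_complete_function_seminorm)
  have "\<exists>C>0. \<forall>f\<in>X. \<forall>A\<in>sets M.
      (\<lambda>x. indicator A x * f x) \<in> X \<and> N (\<lambda>x. indicator A x * f x) \<le> C * N f"
    using bfs unfolding banach_rect_fs_def by blast
  then obtain C where "C > 0" and C: "\<And>f A. f \<in> X \<Longrightarrow> A \<in> sets M \<Longrightarrow>
      (\<lambda>x. indicator A x * f x) \<in> X \<and> N (\<lambda>x. indicator A x * f x) \<le> C * N f"
    by blast
  have "(\<lambda>x. \<bar>f x\<bar>) \<in> X \<and> N (\<lambda>x. \<bar>f x\<bar>) \<le> (2 * C) * N f" if "f \<in> X" for f
  proof -
    have [measurable]: "f \<in> borel_measurable M" using banach_rect_fs_measurable[OF that] .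
    define A where "A = {x \<in> space M. 0 \<le> f x}"
    define B where "B = {x \<in> space M. f x < 0}"
    have "A \<in> sets M" "B \<in> sets M" unfolding A_def B_def by measurable
    then have AB: "(\<lambda>x. indicator A x * f x) \<in> X" "(\<lambda>x. indicator B x * f x) \<in> X"
        "N (\<lambda>x. indicator A x * f x) \<le> C * N f" "N (\<lambda>x. indicator B x * f x) \<le> C * N f"
      using C[OF that] by auto
    define w where "w = (\<lambda>x. indicator A x * f x - indicator B x * f x)"
    have "w \<in> X" unfolding w_def using AB by (intro diff_mem)
    have "N w \<le> (2 * C) * N f" unfolding w_def using diff_le[OF AB(1,2)] AB(3,4) by linarith
    have ae: "AE x in M. w x = \<bar>f x\<bar>"
      by (rule AE_I2) (auto simp: w_def A_def B_def indicator_def)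
    have absX: "(\<lambda>x. \<bar>f x\<bar>) \<in> X"
      by (rule banach_rect_fs_ae_closed[OF \<open>w \<in> X\<close> _ ae]) measurable
    then show ?thesis
      using banach_rect_fs_norm_cong_ae[OF \<open>w \<in> X\<close> absX ae] \<open>N w \<le> (2 * C) * N f\<close> by simp
  qed
  then show thesis using that[of "2 * C"] \<open>C > 0\<close> by simp
qed

end

locale positive_operator = function_space X for X :: "('a \<Rightarrow> real) set" +
  fixes M :: "'a measure" and Y :: "('a \<Rightarrow> real) set" and T :: "('a \<Rightarrow> real) \<Rightarrow> 'a \<Rightarrow> real"
  assumes positive_linear_op: "positive_linear_op M X Y T"
begin

lemma maps_into: "f \<in> X \<Longrightarrow> T f \<in> Y"
  and cong_ae: "f \<in> X \<Longrightarrow> g \<in> X \<Longrightarrow> (AE x in M. f x = g x) \<Longrightarrow> (AE x in M. T f x = T g x)"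
  and add_ae: "f \<in> X \<Longrightarrow> g \<in> X \<Longrightarrow> AE x in M. T (\<lambda>y. f y + g y) x = T f x + T g x"
  and scale_ae: "f \<in> X \<Longrightarrow> AE x in M. T (\<lambda>y. c * f y) x = c * T f x"
  and nonneg_ae: "f \<in> X \<Longrightarrow> (AE x in M. 0 \<le> f x) \<Longrightarrow> (AE x in M. 0 \<le> T f x)"
  using positive_linear_op unfolding positive_linear_op_def by blast+

lemma zero_ae: "AE x in M. T (\<lambda>y. 0) x = 0"
  using scale_ae[OF zero_mem, of 0] by simp

lemma diff_ae:
  assumes "f \<in> X" "g \<in> X"
  shows "AE x in M. T (\<lambda>y. f y - g y) x = T f x - T g x"
  using add_ae[OF assms(1) scale_mem[OF assms(2)], of "-1"] scale_ae[OF assms(2), of "-1"]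
  by eventually_elim simp

lemma mono_ae:
  assumes "f \<in> X" "g \<in> X" "AE x in M. f x \<le> g x"
  shows "AE x in M. T f x \<le> T g x"
  using nonneg_ae[OF diff_mem[OF assms(2,1)]] assms(3) diff_ae[OF assms(2,1)]
  by (auto elim: eventually_mono)

lemma abs_le_ae:
  assumes "f \<in> X" "(\<lambda>y. \<bar>f y\<bar>) \<in> X"
  shows "AE x in M. \<bar>T f x\<bar> \<le> T (\<lambda>y. \<bar>f y\<bar>) x"
proof -
  have "AE x in M. T f x \<le> T (\<lambda>y. \<bar>f y\<bar>) x"
    by (rule mono_ae[OF assms]) simp
  moreover have "AE x in M. T (\<lambda>y. -1 * f y) x \<le> T (\<lambda>y. \<bar>f y\<bar>) x"
    by (rule mono_ae[OF scale_mem[OF assms(1)] assms(2)]) simp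
  ultimately show ?thesis using scale_ae[OF assms(1), of "-1"] by eventually_elim auto
qed

end

lemma tendsto_zero_subseq_below:
  fixes a e :: "nat \<Rightarrow> real"
  assumes "a \<longlonglongrightarrow> 0" "\<And>n. 0 < e n"
  obtains r where "strict_mono r" "\<And>n. a (r n) < e n"
proof -
  have ev: "\<forall>\<^sub>F m in sequentially. a m < e n" for n
    using order_tendstoD(2)[OF assms(1) assms(2)] .
  have "\<exists>r. \<forall>n. a (r n) < e n \<and> r n < r (Suc n)"
  proof (rule dependent_nat_choice)
    show "\<exists>m. a m < e 0" using eventually_happens'[OF sequentially_bot ev] .
    show "\<exists>m'. a m' < e (Suc n) \<and> m < m'" for m n
      using eventually_happens'[OF sequentially_bot eventually_conj[OF ev eventually_gt_at_top]] .
  qed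
  then show thesis using that by (auto simp: strict_mono_Suc_iff)
qed

lemma subsequence_propertyD:
  assumes "subsequence_property M X N" "\<And>n. s n \<in> X" "f \<in> X" "(\<lambda>n. N (\<lambda>x. s n x - f x)) \<longlonglongrightarrow> 0"
  obtains r where "strict_mono r" "AE x in M. (\<lambda>n. s (r n) x) \<longlonglongrightarrow> f x"
  using assms unfolding subsequence_property_def by blast

lemma summable_dominating_function:
  assumes X: "banach_rect_fs M X N" "subsequence_property M X N"
    and w: "\<And>n. w n \<in> X" "\<And>n x. 0 \<le> w n x" and "summable (\<lambda>n. N (w n))"
  obtains H where "H \<in> X" "AE x in M. \<forall>n. w n x \<le> H x"
proof -
  interpret complete_function_seminorm X N
    by (rule banach_rect_fs_complete_function_seminorm[OF X(1)])
  obtain H where "H \<in> X" and H: "(\<lambda>n. N (\<lambda>x. (\<Sum>i<n. w i x) - H x)) \<longlonglongrightarrow> 0"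
    using summable_series_converges[of w "\<lambda>n. N (w n)", OF w(1) order_refl \<open>summable _\<close>] by blast
  obtain q where "strict_mono q" and q: "AE x in M. (\<lambda>n. \<Sum>i<q n. w i x) \<longlonglongrightarrow> H x"
    using subsequence_propertyD[of M X N "\<lambda>n x. \<Sum>i<n. w i x", OF X(2) sum_mem[OF w(1)] \<open>H \<in> X\<close> H]
    by blast
  have "\<forall>n. w n x \<le> H x" if lim: "(\<lambda>m. \<Sum>i<q m. w i x) \<longlonglongrightarrow> H x" for x
  proof
    fix n
    have "w n x \<le> (\<Sum>i<q m. w i x)" if "m \<ge> Suc n" for m
      using seq_suble[OF \<open>strict_mono q\<close>, of m] that w(2) by (intro member_le_sum) auto
    then show "w n x \<le> H x" using LIMSEQ_le_const[OF lim] by blast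
  qed
  with q have "AE x in M. \<forall>n. w n x \<le> H x" by (auto elim: eventually_mono)
  with \<open>H \<in> X\<close> show thesis by (rule that)
qed

context positive_operator
begin

lemma ae_tendsto_zero_if_dominated:
  assumes u: "\<And>n. u n \<in> X" "\<And>n. (\<lambda>x. \<bar>u n x\<bar>) \<in> X" and "H \<in> X"
    and dom: "AE x in M. \<forall>n. 2^n * \<bar>u n x\<bar> \<le> H x"
  shows "AE x in M. (\<lambda>n. T (u n) x) \<longlonglongrightarrow> 0"
proof -
  have "AE x in M. \<bar>T (u n) x\<bar> \<le> T H x / 2^n" for n
  proof -
    have "AE x in M. 2^n * \<bar>u n x\<bar> \<le> H x" using dom by (rule eventually_mono) blast
    then have "AE x in M. T (\<lambda>y. 2^n * \<bar>u n y\<bar>) x \<le> T H x"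
      by (rule mono_ae[OF scale_mem[OF u(2)[of n]] \<open>H \<in> X\<close>])
    with scale_ae[OF u(2)[of n], of "2^n"] abs_le_ae[OF u(1)[of n] u(2)[of n]] show ?thesis
    proof eventually_elim
      case (elim x)
      then have "2^n * \<bar>T (u n) x\<bar> \<le> T H x"
        by (metis mult_left_mono order_trans zero_le_numeral zero_le_power)
      then show ?case by (simp add: field_simps)
    qed
  qed
  then have "AE x in M. \<forall>n. \<bar>T (u n) x\<bar> \<le> T H x / 2^n"
    by (simp add: AE_all_countable)
  then show ?thesis
  proof (rule eventually_mono)
    fix x assume "\<forall>n. \<bar>T (u n) x\<bar> \<le> T H x / 2^n"
    then show "(\<lambda>n. T (u n) x) \<longlonglongrightarrow> 0"
      by (intro Lim_null_comparison[OF _ LIMSEQ_divide_realpow_zero]) (auto intro: always_eventually)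
  qed
qed

end

context positive_operator
begin

lemma tendsto_ae_subseq:
  assumes X: "banach_rect_fs M X N" "subsequence_property M X N"
    and s: "\<And>n. s n \<in> X" and "f \<in> X" and lim: "(\<lambda>n. N (\<lambda>x. s n x - f x)) \<longlonglongrightarrow> 0"
  obtains r where "strict_mono r" "AE x in M. (\<lambda>n. T (s (r n)) x) \<longlonglongrightarrow> T f x"
proof -
  interpret N: complete_function_seminorm X N
    by (rule banach_rect_fs_complete_function_seminorm[OF X(1)])
  obtain r where "strict_mono r" and r: "\<And>n. N (\<lambda>x. s (r n) x - f x) < (1/4)^n"
    using tendsto_zero_subseq_below[OF lim, of "\<lambda>n. (1/4)^n"] by auto
  obtain C where "C > 0"
    and C: "\<And>g. g \<in> X \<Longrightarrow> (\<lambda>x. \<bar>g x\<bar>) \<in> X \<and> N (\<lambda>x. \<bar>g x\<bar>) \<le> C * N g"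
    using banach_rect_fs_abs[OF X(1)] by blast
  define u where "u n = (\<lambda>x. s (r n) x - f x)" for n
  have u: "u n \<in> X" "(\<lambda>x. \<bar>u n x\<bar>) \<in> X" for n
    unfolding u_def using diff_mem[OF s \<open>f \<in> X\<close>] C by auto
  define w where "w n = (\<lambda>x. 2^n * \<bar>u n x\<bar>)" for n
  have w: "w n \<in> X" "0 \<le> w n x" for n x
    unfolding w_def using scale_mem[OF u(2)] by auto
  have Nw: "N (w n) \<le> C * (1/2)^n" for n
  proof -
    have "N (w n) = 2^n * N (\<lambda>x. \<bar>u n x\<bar>)" unfolding w_def using N.homogeneous[OF u(2)] by simp
    also have "\<dots> \<le> 2^n * (C * N (u n))" using C[OF u(1)] by simp
    also have "\<dots> \<le> 2^n * (C * (1/4)^n)" using r[of n] \<open>C > 0\<close> by (simp add: u_def)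
    also have "\<dots> = C * (2 * (1/4))^n" unfolding power_mult_distrib by simp
    also have "\<dots> = C * (1/2)^n" by simp
    finally show ?thesis .
  qed
  have "summable (\<lambda>n. N (w n))"
  proof (rule summable_comparison_test'[of "\<lambda>n. C * (1/2)^n"])
    show "summable (\<lambda>n. C * (1/2::real)^n)"
      by (rule summable_mult[OF summable_geometric]) simp
    show "norm (N (w n)) \<le> C * (1/2)^n" for n
      using Nw[of n] N.nonneg[OF w(1)[of n]] by simp
  qed
  then obtain H where "H \<in> X" and H: "AE x in M. \<forall>n. w n x \<le> H x"
    by (rule summable_dominating_function[OF X w])
  have "AE x in M. (\<lambda>n. T (u n) x) \<longlonglongrightarrow> 0"
    using H by (intro ae_tendsto_zero_if_dominated[OF u \<open>H \<in> X\<close>]) (simp add: w_def)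
  moreover have "AE x in M. \<forall>n. T (u n) x = T (s (r n)) x - T f x"
    unfolding AE_all_countable u_def using diff_ae[OF s \<open>f \<in> X\<close>] by blast
  ultimately have "AE x in M. (\<lambda>n. T (s (r n)) x) \<longlonglongrightarrow> T f x"
  proof eventually_elim
    case (elim x)
    then show ?case using tendsto_add[OF elim(1) tendsto_const[of "T f x"]] by simp
  qed
  with \<open>strict_mono r\<close> show thesis by (rule that)
qed

end

locale positive_operator_bfs = positive_operator X M Y T for X M Y T +
  fixes NX NY :: "('a \<Rightarrow> real) \<Rightarrow> real"
  assumes X: "banach_rect_fs M X NX" "subsequence_property M X NX"
    and Y: "banach_rect_fs M Y NY" "subsequence_property M Y NY"
begin

sublocale NX: complete_function_seminorm X NX
  by (rule banach_rect_fs_complete_function_seminorm[OF X(1)])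

sublocale NY: complete_function_seminorm Y NY
  by (rule banach_rect_fs_complete_function_seminorm[OF Y(1)])

lemma closed_graph:
  assumes s: "\<And>n. s n \<in> X" and "f \<in> X" and lim: "(\<lambda>n. NX (\<lambda>x. s n x - f x)) \<longlonglongrightarrow> 0"
    and "g \<in> Y" and limT: "(\<lambda>n. NY (\<lambda>x. T (s n) x - g x)) \<longlonglongrightarrow> 0"
  shows "AE x in M. T f x = g x"
proof -
  obtain r where "strict_mono r" and r: "AE x in M. (\<lambda>n. T (s (r n)) x) \<longlonglongrightarrow> T f x"
    by (rule tendsto_ae_subseq[OF X s \<open>f \<in> X\<close> lim])
  have "(\<lambda>n. NY (\<lambda>x. T (s (r n)) x - g x)) \<longlonglongrightarrow> 0"
    using LIMSEQ_subseq_LIMSEQ[OF limT \<open>strict_mono r\<close>] by (simp add: o_def)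
  then obtain q where "strict_mono q" and q: "AE x in M. (\<lambda>n. T (s (r (q n))) x) \<longlonglongrightarrow> g x"
    by (rule subsequence_propertyD[OF Y(2) maps_into[OF s] \<open>g \<in> Y\<close>])
  from r q show ?thesis
  proof eventually_elim
    case (elim x)
    then show ?case
      using LIMSEQ_subseq_LIMSEQ[OF elim(1) \<open>strict_mono q\<close>] LIMSEQ_unique by (auto simp: o_def)
  qed
qed

lemma norm_image_diff:
  "f \<in> X \<Longrightarrow> g \<in> X \<Longrightarrow> NY (T (\<lambda>x. f x - g x)) = NY (\<lambda>x. T f x - T g x)"
  using banach_rect_fs_norm_cong_ae[OF Y(1) maps_into[OF diff_mem] NY.diff_mem[OF maps_into maps_into]]
    diff_ae by blast

definition graph_norm :: "('a \<Rightarrow> real) \<Rightarrow> real" where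
  "graph_norm f = NX f + NY (T f)"

lemma graph_norm_seminorm: "function_seminorm X graph_norm"
proof
  show "0 \<le> graph_norm f" if "f \<in> X" for f
    using NX.nonneg[OF that] NY.nonneg[OF maps_into[OF that]] by (simp add: graph_norm_def)
  show "graph_norm (\<lambda>x. c * f x) = \<bar>c\<bar> * graph_norm f" if "f \<in> X" for f c
  proof -
    have "NY (T (\<lambda>x. c * f x)) = NY (\<lambda>x. c * T f x)"
      using banach_rect_fs_norm_cong_ae[OF Y(1) maps_into[OF scale_mem[OF that]]
          NY.scale_mem[OF maps_into[OF that]] scale_ae[OF that]] .
    then show ?thesis
      using NX.homogeneous[OF that] NY.homogeneous[OF maps_into[OF that]]
      by (simp add: graph_norm_def distrib_left)
  qed
  show "graph_norm (\<lambda>x. f x + g x) \<le> graph_norm f + graph_norm g" if "f \<in> X" "g \<in> X" for f g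
  proof -
    have "NY (T (\<lambda>x. f x + g x)) = NY (\<lambda>x. T f x + T g x)"
      using banach_rect_fs_norm_cong_ae[OF Y(1) maps_into[OF add_mem[OF that]]
          NY.add_mem[OF maps_into maps_into] add_ae[OF that]] that by blast
    then show ?thesis
      using NX.triangle[OF that] NY.triangle[OF maps_into[OF that(1)] maps_into[OF that(2)]]
      by (simp add: graph_norm_def)
  qed
qed

lemma graph_norm_complete: "complete_function_seminorm X graph_norm"
proof -
  interpret G: function_seminorm X graph_norm by (rule graph_norm_seminorm)
  show ?thesis
  proof
    fix s :: "nat \<Rightarrow> 'a \<Rightarrow> real" assume s: "\<And>n. s n \<in> X"
      and cauchy: "\<forall>e>0. \<exists>K. \<forall>m\<ge>K. \<forall>n\<ge>K. graph_norm (\<lambda>x. s m x - s n x) < e"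
    have parts: "NX (\<lambda>x. s m x - s n x) \<le> graph_norm (\<lambda>x. s m x - s n x)"
      "NY (\<lambda>x. T (s m) x - T (s n) x) \<le> graph_norm (\<lambda>x. s m x - s n x)" for m n
      using NX.nonneg[OF diff_mem[OF s s]] NY.nonneg[OF maps_into[OF diff_mem[OF s s]]]
        norm_image_diff[OF s s] by (simp_all add: graph_norm_def)
    have "\<forall>e>0. \<exists>K. \<forall>m\<ge>K. \<forall>n\<ge>K. NX (\<lambda>x. s m x - s n x) < e"
      using cauchy parts(1) by (meson order.strict_trans1)
    then obtain f where "f \<in> X" and f: "(\<lambda>n. NX (\<lambda>x. s n x - f x)) \<longlonglongrightarrow> 0"
      using NX.complete[of s, OF s] by blast
    have "\<forall>e>0. \<exists>K. \<forall>m\<ge>K. \<forall>n\<ge>K. NY (\<lambda>x. T (s m) x - T (s n) x) < e"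
      using cauchy parts(2) by (meson order.strict_trans1)
    then obtain g where "g \<in> Y" and g: "(\<lambda>n. NY (\<lambda>x. T (s n) x - g x)) \<longlonglongrightarrow> 0"
      using NY.complete[of "\<lambda>n. T (s n)", OF maps_into[OF s]] by blast
    have "AE x in M. T f x = g x" by (rule closed_graph[OF s \<open>f \<in> X\<close> f \<open>g \<in> Y\<close> g])
    then have eq: "NY (T (\<lambda>x. s n x - f x)) = NY (\<lambda>x. T (s n) x - g x)" for n
      using norm_image_diff[OF s \<open>f \<in> X\<close>]
        banach_rect_fs_norm_cong_ae[OF Y(1) NY.diff_mem[OF maps_into[OF s] maps_into[OF \<open>f \<in> X\<close>]]
          NY.diff_mem[OF maps_into[OF s] \<open>g \<in> Y\<close>]]
      by (auto elim: eventually_mono)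
    have "(\<lambda>n. graph_norm (\<lambda>x. s n x - f x)) \<longlonglongrightarrow> 0 + 0"
      unfolding graph_norm_def eq by (intro tendsto_add f g)
    then show "\<exists>f\<in>X. (\<lambda>n. graph_norm (\<lambda>x. s n x - f x)) \<longlonglongrightarrow> 0" using \<open>f \<in> X\<close> by auto
  qed
qed

theorem bounded: "\<exists>C>0. \<forall>f\<in>X. NY (T f) \<le> C * NX f"
proof -
  have "dominated_seminorms X NX graph_norm"
  proof (rule dominated_seminorms.intro)
    show "complete_function_seminorm X NX" "complete_function_seminorm X graph_norm"
      by (fact NX.complete_function_seminorm_axioms, rule graph_norm_complete)
    show "dominated_seminorms_axioms X NX graph_norm"
    proof
      show "NX f \<le> graph_norm f" if "f \<in> X" for f
        using NY.nonneg[OF maps_into[OF that]] by (simp add: graph_norm_def)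
      show "graph_norm f = 0" if "f \<in> X" "NX f = 0" for f
      proof -
        have "AE x in M. f x = 0" using banach_rect_fs_norm_eq_0_iff[OF X(1) that(1)] that(2) by simp
        then have "AE x in M. T f x = T (\<lambda>x. 0) x" by (rule cong_ae[OF that(1) zero_mem])
        with zero_ae have "AE x in M. T f x = 0" by eventually_elim simp
        then show ?thesis
          using banach_rect_fs_norm_eq_0_iff[OF Y(1) maps_into[OF that(1)]] that(2)
          by (simp add: graph_norm_def)
      qed
    qed
  qed
  then obtain C where "C > 0" and C: "\<forall>f\<in>X. graph_norm f \<le> C * NX f"
    using dominated_seminorms.bounded by blast
  have "NY (T f) \<le> C * NX f" if "f \<in> X" for f
    using C that NX.nonneg[OF that] by (fastforce simp: graph_norm_def)
  then show ?thesis using \<open>C > 0\<close> by blast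
qed

corollary continuous:
  "\<forall>f\<in>X. \<forall>e>0. \<exists>d>0. \<forall>g\<in>X. NX (\<lambda>x. g x - f x) < d \<longrightarrow> NY (\<lambda>x. T g x - T f x) < e"
proof (intro ballI allI impI)
  fix f and e :: real assume "f \<in> X" "e > 0"
  obtain C where "C > 0" and C: "\<forall>f\<in>X. NY (T f) \<le> C * NX f" using bounded by blast
  show "\<exists>d>0. \<forall>g\<in>X. NX (\<lambda>x. g x - f x) < d \<longrightarrow> NY (\<lambda>x. T g x - T f x) < e"
  proof (intro exI[of _ "e / C"] conjI ballI impI)
    show "e / C > 0" using \<open>e > 0\<close> \<open>C > 0\<close> by simp
    fix g assume "g \<in> X" "NX (\<lambda>x. g x - f x) < e / C"
    have "NY (\<lambda>x. T g x - T f x) = NY (T (\<lambda>x. g x - f x))"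
      using norm_image_diff[OF \<open>g \<in> X\<close> \<open>f \<in> X\<close>] by simp
    also have "\<dots> \<le> C * NX (\<lambda>x. g x - f x)" using C diff_mem[OF \<open>g \<in> X\<close> \<open>f \<in> X\<close>] by blast
    also have "\<dots> < C * (e / C)"
      using \<open>NX (\<lambda>x. g x - f x) < e / C\<close> \<open>C > 0\<close> by (intro mult_strict_left_mono)
    also have "\<dots> = e" using \<open>C > 0\<close> by simp
    finally show "NY (\<lambda>x. T g x - T f x) < e" .
  qed
qed

end

lemma positive_operator_bfsI:
  assumes "banach_rect_fs M X NX" "subsequence_property M X NX"
    and "banach_rect_fs M Y NY" "subsequence_property M Y NY"
    and "positive_linear_op M X Y T"
  shows "positive_operator_bfs X M Y T NX NY"
proof -
  interpret NX: complete_function_seminorm X NX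
    by (rule banach_rect_fs_complete_function_seminorm[OF assms(1)])
  show ?thesis
    by (intro positive_operator_bfs.intro positive_operator.intro positive_operator_axioms.intro
        positive_operator_bfs_axioms.intro NX.function_space_axioms assms)
qed

lemma banach_rect_fs_norms_equivalent:
  assumes "banach_rect_fs M X N" "subsequence_property M X N"
    and "banach_rect_fs M X N0" "subsequence_property M X N0"
  shows "\<exists>c>0. \<exists>C>0. \<forall>f\<in>X. c * N0 f \<le> N f \<and> N f \<le> C * N0 f"
proof -
  have id: "positive_linear_op M X X (\<lambda>f. f)" by (simp add: positive_linear_op_def)
  obtain C1 where "C1 > 0" and C1: "\<forall>f\<in>X. N0 f \<le> C1 * N f"
    using positive_operator_bfs.bounded[OF positive_operator_bfsI[OF assms id]] by blast
  obtain C2 where "C2 > 0" and C2: "\<forall>f\<in>X. N f \<le> C2 * N0 f"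
    using positive_operator_bfs.bounded[OF positive_operator_bfsI[OF assms(3,4,1,2) id]] by blast
  have "1 / C1 * N0 f \<le> N f" if "f \<in> X" for f
    using C1 that \<open>C1 > 0\<close> by (simp add: field_simps)
  then show ?thesis using \<open>C1 > 0\<close> \<open>C2 > 0\<close> C2 by (intro exI[of _ "1 / C1"] exI[of _ C2]) auto
qed

theorem corollary4p4:
  fixes M :: "'a measure"
  assumes "finite_measure M"
  shows "(\<forall>X NX Y NY T.
            banach_rect_fs M X NX \<and> subsequence_property M X NX \<and>
            banach_rect_fs M Y NY \<and> subsequence_property M Y NY \<and>
            positive_linear_op M X Y T
            \<longrightarrow> (\<forall>f\<in>X. \<forall>e>0. \<exists>d>0. \<forall>g\<in>X.
                   NX (\<lambda>x. g x - f x) < d \<longrightarrow> NY (\<lambda>x. T g x - T f x) < e))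
       \<and> (\<forall>X N N0.
            banach_rect_fs M X N \<and> subsequence_property M X N \<and>
            banach_rect_fs M X N0 \<and> subsequence_property M X N0
            \<longrightarrow> (\<exists>c>0. \<exists>C>0. \<forall>f\<in>X. c * N0 f \<le> N f \<and> N f \<le> C * N0 f))"
proof (intro conjI allI impI)
  fix X NX Y NY T
  assume "banach_rect_fs M X NX \<and> subsequence_property M X NX \<and>
    banach_rect_fs M Y NY \<and> subsequence_property M Y NY \<and> positive_linear_op M X Y T"
  then interpret positive_operator_bfs X M Y T NX NY
    by (intro positive_operator_bfsI) simp_all
  show "\<forall>f\<in>X. \<forall>e>0. \<exists>d>0. \<forall>g\<in>X. NX (\<lambda>x. g x - f x) < d \<longrightarrow> NY (\<lambda>x. T g x - T f x) < e"
    by (rule continuous)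
next
  fix X N N0
  assume "banach_rect_fs M X N \<and> subsequence_property M X N \<and>
    banach_rect_fs M X N0 \<and> subsequence_property M X N0"
  then show "\<exists>c>0. \<exists>C>0. \<forall>f\<in>X. c * N0 f \<le> N f \<and> N f \<le> C * N0 f"
    by (intro banach_rect_fs_norms_equivalent[of M]) simp_all
qed

end
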